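(* Let $G$ be a $6$-regular graph, $\mathcal S$ a canonical path partition of $G$, $P$ a path component, and $X=x_1x_2\cdots x_k$ with $k\ge 2$ a sequence of consecutive vertices of $P$, all in $V_2^b$, such that no vertex of $X$ is joined by a free edge to a dangerous vertex. Then $b(X)\le \frac23(k+2)$.
   Context: All graphs are finite, simple and undirected. A path partition of $G=(V,E)$ is a set of vertex-disjoint paths (single vertices allowed) covering $V$; its members are components. A component with $t\ge3$ vertices is a cycle component if the subgraph induced on its vertex set has a spanning cycle; a one-vertex component is an isolated vertex; every other component is a path component. A path partition is canonical if (1) it has the minimum number of components among all path partitions of $G$; (2) among those, it has the maximum number of cycle components; (3) it has no isolated vertices. Given a canonical path partition $\mathcal S$ of $G$: two vertices are path neighbors if they are consecutive on a path component. An edge of $G$ is a free edge unless it joins two path neighbors or has both endpoints in the same cycle component. $V_1$ is the set of end-vertices of path components together with all vertices of cycle components. The remaining vertices are classified by the first applicable rule: $V_2$: joined by a free edge to a vertex of $V_1$; $V_3$: both path neighbors lie in $V_2$; $V_4$: exactly one path neighbor lies in $V_2$; $V_5$: all others. $V_2^b$ is the set of vertices of $V_2$ having at least one path neighbor in $V_2$. A balanced edge is a free edge with one endpoint in $V_1$ and the other in $V_2$. A vertex of $V_2$ is moderate if it is incident to at least two balanced edges, at least one of whose other endpoints is an end-vertex of a path component; it is heavy if it is incident to at least three balanced edges whose other endpoints are end-vertices of path components. A vertex of $V_3$ is dangerous if one of its path neighbors is heavy and the other is moderate. For $Y\subseteq V_2$, $b(Y)$ is the sum, over all balanced edges $xy$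 with $x\in Y$ and $y\in V_1$, of $2/3$ if $y$ is an end-vertex of a path component, $1/|V(C)|$ if $y$ lies in a cycle component $C$ with $|V(C)|\le 6$, and $0$ if $y$ lies in a cycle component with at least $7$ vertices. *)

theory Defs
  imports Complex_Main
begin

definition graph :: "'a set \<Rightarrow> ('a \<Rightarrow> 'a \<Rightarrow> bool) \<Rightarrow> bool" where
  "graph V E \<longleftrightarrow> finite V \<and> (\<forall>u v. E u v \<longrightarrow> E v u) \<and> (\<forall>u. \<not> E u u)
     \<and> (\<forall>u v. E u v \<longrightarrow> u \<in> V \<and> v \<in> V)"

definition regular :: "'a set \<Rightarrow> ('a \<Rightarrow> 'a \<Rightarrow> bool) \<Rightarrow> nat \<Rightarrow> bool" where
  "regular V E d \<longleftrightarrow> (\<forall>v\<in>V. card {u. E v u} = d)"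

definition is_path :: "('a \<Rightarrow> 'a \<Rightarrow> bool) \<Rightarrow> 'a list \<Rightarrow> bool" where
  "is_path E p \<longleftrightarrow> p \<noteq> [] \<and> distinct p \<and> (\<forall>i. Suc i < length p \<longrightarrow> E (p!i) (p!Suc i))"

definition path_partition :: "'a set \<Rightarrow> ('a \<Rightarrow> 'a \<Rightarrow> bool) \<Rightarrow> 'a list set \<Rightarrow> bool" where
  "path_partition V E S \<longleftrightarrow>
     (\<forall>p\<in>S. is_path E p \<and> set p \<subseteq> V)
   \<and> (\<forall>p\<in>S. \<forall>q\<in>S. p \<noteq> q \<longrightarrow> set p \<inter> set q = {})
   \<and> \<Union> (set ` S) = V"

definition spanning_cycle :: "('a \<Rightarrow> 'a \<Rightarrow> bool) \<Rightarrow> 'a set \<Rightarrow> bool" where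
  "spanning_cycle E A \<longleftrightarrow> (\<exists>c. distinct c \<and> set c = A \<and> length c \<ge> 3
      \<and> (\<forall>i. Suc i < length c \<longrightarrow> E (c!i) (c!Suc i)) \<and> E (last c) (hd c))"

definition cycle_comp :: "('a \<Rightarrow> 'a \<Rightarrow> bool) \<Rightarrow> 'a list \<Rightarrow> bool" where
  "cycle_comp E p \<longleftrightarrow> length p \<ge> 3 \<and> spanning_cycle E (set p)"

definition path_comp :: "('a \<Rightarrow> 'a \<Rightarrow> bool) \<Rightarrow> 'a list \<Rightarrow> bool" where
  "path_comp E p \<longleftrightarrow> length p \<ge> 2 \<and> \<not> cycle_comp E p"

definition num_cycles :: "('a \<Rightarrow> 'a \<Rightarrow> bool) \<Rightarrow> 'a list set \<Rightarrow> nat" where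
  "num_cycles E S = card {p\<in>S. cycle_comp E p}"

definition canonical :: "'a set \<Rightarrow> ('a \<Rightarrow> 'a \<Rightarrow> bool) \<Rightarrow> 'a list set \<Rightarrow> bool" where
  "canonical V E S \<longleftrightarrow> path_partition V E S
     \<and> (\<forall>S'. path_partition V E S' \<longrightarrow> card S \<le> card S')
     \<and> (\<forall>S'. path_partition V E S' \<and> card S' = card S \<longrightarrow> num_cycles E S' \<le> num_cycles E S)
     \<and> (\<forall>p\<in>S. length p \<noteq> 1)"

definition path_nbr :: "('a \<Rightarrow> 'a \<Rightarrow> bool) \<Rightarrow> 'a list set \<Rightarrow> 'a \<Rightarrow> 'a \<Rightarrow> bool" where
  "path_nbr E S u v \<longleftrightarrow> (\<exists>p\<in>S. path_comp E p \<and> (\<exists>i. Suc i < length p \<and>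
      ((p!i = u \<and> p!Suc i = v) \<or> (p!i = v \<and> p!Suc i = u))))"

definition same_cycle :: "('a \<Rightarrow> 'a \<Rightarrow> bool) \<Rightarrow> 'a list set \<Rightarrow> 'a \<Rightarrow> 'a \<Rightarrow> bool" where
  "same_cycle E S u v \<longleftrightarrow> (\<exists>p\<in>S. cycle_comp E p \<and> u \<in> set p \<and> v \<in> set p)"

definition free_edge :: "('a \<Rightarrow> 'a \<Rightarrow> bool) \<Rightarrow> 'a list set \<Rightarrow> 'a \<Rightarrow> 'a \<Rightarrow> bool" where
  "free_edge E S u v \<longleftrightarrow> E u v \<and> \<not> path_nbr E S u v \<and> \<not> same_cycle E S u v"

definition end_vertex :: "('a \<Rightarrow> 'a \<Rightarrow> bool) \<Rightarrow> 'a list set \<Rightarrow> 'a \<Rightarrow> bool" where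
  "end_vertex E S v \<longleftrightarrow> (\<exists>p\<in>S. path_comp E p \<and> (v = hd p \<or> v = last p))"

definition in_cycle :: "('a \<Rightarrow> 'a \<Rightarrow> bool) \<Rightarrow> 'a list set \<Rightarrow> 'a \<Rightarrow> bool" where
  "in_cycle E S v \<longleftrightarrow> (\<exists>p\<in>S. cycle_comp E p \<and> v \<in> set p)"

definition V1 :: "('a \<Rightarrow> 'a \<Rightarrow> bool) \<Rightarrow> 'a list set \<Rightarrow> 'a set" where
  "V1 E S = {v. end_vertex E S v \<or> in_cycle E S v}"

definition V2 :: "'a set \<Rightarrow> ('a \<Rightarrow> 'a \<Rightarrow> bool) \<Rightarrow> 'a list set \<Rightarrow> 'a set" where
  "V2 V E S = {v\<in>V. v \<notin> V1 E S \<and> (\<exists>u\<in>V1 E S. free_edge E S v u)}"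

definition V3 :: "'a set \<Rightarrow> ('a \<Rightarrow> 'a \<Rightarrow> bool) \<Rightarrow> 'a list set \<Rightarrow> 'a set" where
  "V3 V E S = {v\<in>V. v \<notin> V1 E S \<and> v \<notin> V2 V E S
      \<and> (\<forall>u. path_nbr E S v u \<longrightarrow> u \<in> V2 V E S)}"

definition V4 :: "'a set \<Rightarrow> ('a \<Rightarrow> 'a \<Rightarrow> bool) \<Rightarrow> 'a list set \<Rightarrow> 'a set" where
  "V4 V E S = {v\<in>V. v \<notin> V1 E S \<and> v \<notin> V2 V E S \<and> v \<notin> V3 V E S
      \<and> card {u. path_nbr E S v u \<and> u \<in> V2 V E S} = 1}"

definition V5 :: "'a set \<Rightarrow> ('a \<Rightarrow> 'a \<Rightarrow> bool) \<Rightarrow> 'a list set \<Rightarrow> 'a set" where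
  "V5 V E S = V - V1 E S - V2 V E S - V3 V E S - V4 V E S"

definition V2b :: "'a set \<Rightarrow> ('a \<Rightarrow> 'a \<Rightarrow> bool) \<Rightarrow> 'a list set \<Rightarrow> 'a set" where
  "V2b V E S = {v\<in>V2 V E S. \<exists>u. path_nbr E S v u \<and> u \<in> V2 V E S}"

definition balanced :: "'a set \<Rightarrow> ('a \<Rightarrow> 'a \<Rightarrow> bool) \<Rightarrow> 'a list set \<Rightarrow> 'a \<Rightarrow> 'a \<Rightarrow> bool" where
  "balanced V E S u v \<longleftrightarrow> free_edge E S u v \<and>
     ((u \<in> V1 E S \<and> v \<in> V2 V E S) \<or> (v \<in> V1 E S \<and> u \<in> V2 V E S))"

definition moderate :: "'a set \<Rightarrow> ('a \<Rightarrow> 'a \<Rightarrow> bool) \<Rightarrow> 'a list set \<Rightarrow> 'a \<Rightarrow> bool" where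
  "moderate V E S v \<longleftrightarrow> v \<in> V2 V E S \<and> card {u. balanced V E S v u} \<ge> 2
     \<and> (\<exists>u. balanced V E S v u \<and> end_vertex E S u)"

definition heavy :: "'a set \<Rightarrow> ('a \<Rightarrow> 'a \<Rightarrow> bool) \<Rightarrow> 'a list set \<Rightarrow> 'a \<Rightarrow> bool" where
  "heavy V E S v \<longleftrightarrow> v \<in> V2 V E S \<and> card {u. balanced V E S v u \<and> end_vertex E S u} \<ge> 3"

definition dangerous :: "'a set \<Rightarrow> ('a \<Rightarrow> 'a \<Rightarrow> bool) \<Rightarrow> 'a list set \<Rightarrow> 'a \<Rightarrow> bool" where
  "dangerous V E S v \<longleftrightarrow> v \<in> V3 V E S \<and> (\<exists>u w. u \<noteq> w \<and> path_nbr E S v u \<and> path_nbr E S v w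
      \<and> heavy V E S u \<and> moderate V E S w)"

definition bweight :: "('a \<Rightarrow> 'a \<Rightarrow> bool) \<Rightarrow> 'a list set \<Rightarrow> 'a \<Rightarrow> real" where
  "bweight E S y = (if end_vertex E S y then 2/3
     else (let C = (SOME p. p \<in> S \<and> cycle_comp E p \<and> y \<in> set p) in
           if length C \<le> 6 then 1 / real (length C) else 0))"

definition b :: "'a set \<Rightarrow> ('a \<Rightarrow> 'a \<Rightarrow> bool) \<Rightarrow> 'a list set \<Rightarrow> 'a set \<Rightarrow> real" where
  "b V E S Y = (\<Sum>(x, y) \<in> {(x, y). x \<in> Y \<and> y \<in> V1 E S \<and> balanced V E S x y}. bweight E S y)"

end

theory Submission
  imports Defs
begin

text \<open>
  Every vertex \<open>x\<close> of \<open>X\<close> is interior to \<open>P\<close>, so in a 6-regular graph it has at most four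
  balanced edges, and \<open>b(X)\<close> is the total weight of the \<open>V\<^sub>1\<close>-ends of these edges.
  Given consecutive vertices \<open>x, x'\<close> of \<open>P\<close> with \<open>V\<^sub>1\<close>-neighbours \<open>y\<close> of \<open>x\<close> and \<open>z\<close>
  of \<open>x'\<close>, one can usually cut \<open>P\<close> between \<open>x\<close> and \<open>x'\<close> and reconnect it through
  Hamiltonian paths of the components of \<open>y\<close> and \<open>z\<close>, which produces fewer components or
  more cycles and contradicts canonicity. What survives is rigid: an end \<open>y\<close> of another
  path component seen by some vertex of \<open>X\<close> is the only \<open>V\<^sub>1\<close>-neighbour of every vertex
  of \<open>X\<close> (total \<open>2k/3\<close>); an end of \<open>P\<close> is seen only by the nearest vertex of \<open>X\<close>, unless
  that vertex sees nothing else and can be removed by induction; and otherwise all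
  cycle neighbours of a vertex of \<open>X\<close> lie on one cycle and avoid both cycle neighbours of
  a fixed vertex on it, which caps their weight at \<open>2/3\<close>, with at most \<open>2/3\<close> more for
  each end of \<open>P\<close>.
\<close>

section \<open>Paths, cycles and Hamiltonian paths\<close>

lemma is_path_iff_successively:
  "is_path E p \<longleftrightarrow> p \<noteq> [] \<and> distinct p \<and> successively E p"
  by (simp add: is_path_def successively_conv_nth)

lemma is_path_append_iff:
  assumes "xs \<noteq> []" "ys \<noteq> []"
  shows "is_path E (xs @ ys) \<longleftrightarrow>
    is_path E xs \<and> is_path E ys \<and> set xs \<inter> set ys = {} \<and> E (last xs) (hd ys)"
  using assms by (auto simp: is_path_iff_successively successively_append_iff)

lemma is_path_append:
  "is_path E xs \<Longrightarrow> is_path E ys \<Longrightarrow> set xs \<inter> set ys = {} \<Longrightarrow> E (last xs) (hd ys)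
    \<Longrightarrow> is_path E (xs @ ys)"
  by (auto simp: is_path_iff_successively successively_append_iff)

lemma is_path_singleton [simp]: "is_path E [x]"
  by (simp add: is_path_iff_successively)

lemma is_path_rev:
  assumes "\<And>u v. E u v \<Longrightarrow> E v u" "is_path E p"
  shows "is_path E (rev p)"
  using assms unfolding is_path_iff_successively by (auto elim: successively_mono)

lemma distinct_hd_neq_last:
  assumes "distinct xs" "2 \<le> length xs"
  shows "hd xs \<noteq> last xs"
proof -
  obtain a ys where "xs = a # ys" "ys \<noteq> []" using assms(2) by (cases xs) fastforce+
  thus ?thesis using assms(1) last_in_set[of ys] by auto
qed

definition cyclic_path :: "('a \<Rightarrow> 'a \<Rightarrow> bool) \<Rightarrow> 'a list \<Rightarrow> bool" where
  "cyclic_path E c \<longleftrightarrow> is_path E c \<and> 3 \<le> length c \<and> E (last c) (hd c)"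

lemma spanning_cycle_iff: "spanning_cycle E A \<longleftrightarrow> (\<exists>c. cyclic_path E c \<and> set c = A)"
  unfolding spanning_cycle_def cyclic_path_def is_path_def
  by (metis list.size(3) not_numeral_le_zero)

lemma cyclic_path_rotate1:
  assumes "cyclic_path E c"
  shows "cyclic_path E (rotate1 c)"
proof -
  have len: "3 \<le> length c" using assms by (simp add: cyclic_path_def)
  then obtain a xs where c: "c = a # xs" by (cases c) auto
  have xs: "xs \<noteq> []" using len c by auto
  have tail: "is_path E xs" "a \<notin> set xs" "E a (hd xs)"
    using is_path_append_iff[of "[a]" xs E] assms c xs by (auto simp: cyclic_path_def)
  have "E (last xs) a" using assms c xs by (simp add: cyclic_path_def)
  hence "is_path E (xs @ [a])" using is_path_append_iff[of xs "[a]" E] tail xs by simp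
  moreover have "3 \<le> length (xs @ [a])" using len c by simp
  moreover have "E (last (xs @ [a])) (hd (xs @ [a]))" using tail(3) xs by simp
  moreover have "rotate1 c = xs @ [a]" using c by simp
  ultimately show ?thesis unfolding cyclic_path_def by presburger
qed

lemma cyclic_path_rotate: "cyclic_path E c \<Longrightarrow> cyclic_path E (rotate n c)"
  by (induction n) (simp_all add: cyclic_path_rotate1)

definition ham_path :: "('a \<Rightarrow> 'a \<Rightarrow> bool) \<Rightarrow> 'a set \<Rightarrow> 'a \<Rightarrow> 'a \<Rightarrow> bool" where
  "ham_path E A y z \<longleftrightarrow> (\<exists>L. is_path E L \<and> set L = A \<and> hd L = y \<and> last L = z)"

lemma ham_path_sym:
  assumes "\<And>u v. E u v \<Longrightarrow> E v u" "ham_path E A y z"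
  shows "ham_path E A z y"
proof -
  obtain L where "is_path E L" "set L = A" "hd L = y" "last L = z"
    using assms(2) unfolding ham_path_def by blast
  moreover have "is_path E (rev L)" using assms(1) calculation(1) by (rule is_path_rev)
  ultimately show ?thesis unfolding ham_path_def by (auto simp: hd_rev last_rev)
qed

lemma ham_path_hd_last: "is_path E p \<Longrightarrow> ham_path E (set p) (hd p) (last p)"
  unfolding ham_path_def by (intro exI[of _ p]) simp

text \<open>The two cycle-neighbours of \<open>z\<close> are the ends of the two Hamiltonian paths that
  remain after deleting one of the cycle edges at \<open>z\<close>.\<close>
lemma spanning_cycle_two_ham_paths:
  assumes sym: "\<And>u v. E u v \<Longrightarrow> E v u" and "spanning_cycle E A" "z \<in> A"
  obtains u1 u2 where "u1 \<noteq> u2" "u1 \<in> A" "u2 \<in> A"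
    "ham_path E A u1 z" "ham_path E A u2 z"
proof -
  from assms(2) obtain c where c: "cyclic_path E c" "set c = A"
    unfolding spanning_cycle_iff by blast
  obtain as bs where "c = as @ z # bs" using split_list[of z c] c(2) assms(3) by blast
  hence rot: "rotate (length as) c = z # (bs @ as)" by (simp add: rotate_append)
  define ws where "ws = bs @ as"
  have cz: "cyclic_path E (z # ws)"
    using cyclic_path_rotate[OF c(1), of "length as"] rot by (simp add: ws_def)
  have set_cz: "set (z # ws) = A"
    using set_rotate[of "length as" c] rot c(2) by (simp add: ws_def)
  have ws: "distinct ws" "2 \<le> length ws" using cz by (auto simp: cyclic_path_def is_path_def)
  then obtain w vs where wvs: "ws = w # vs" "vs \<noteq> []" by (cases ws) fastforce+
  have "hd ws \<noteq> last ws" using ws(1,2) by (rule distinct_hd_neq_last)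
  moreover have "ham_path E A (last ws) z"
  proof -
    have "is_path E (z # ws)" using cz by (simp add: cyclic_path_def)
    with sym have "is_path E (rev (z # ws))" by (rule is_path_rev)
    moreover have "hd (rev (z # ws)) = last ws" "set (rev (z # ws)) = A"
      using wvs(1) set_cz by (auto simp: hd_rev)
    ultimately show ?thesis using ham_path_hd_last[of E "rev (z # ws)"] by simp
  qed
  moreover have "ham_path E A (hd ws) z"
  proof -
    have "is_path E (ws @ [z])" using cyclic_path_rotate1[OF cz] by (simp add: cyclic_path_def)
    moreover have "set (ws @ [z]) = A" using set_cz by auto
    ultimately show ?thesis using ham_path_hd_last[of E "ws @ [z]"] wvs by simp
  qed
  moreover have "hd ws \<in> A" "last ws \<in> A" using wvs(1) set_cz by auto
  ultimately show ?thesis using that by blast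
qed

definition inner_step :: "'a list \<Rightarrow> 'a \<Rightarrow> 'a \<Rightarrow> bool" where
  "inner_step Q x x' \<longleftrightarrow> (\<exists>A B. A \<noteq> [] \<and> B \<noteq> [] \<and> Q = A @ [x, x'] @ B)"

lemma inner_step_revI: "inner_step Q x' x \<Longrightarrow> inner_step (rev Q) x x'"
proof -
  assume "inner_step Q x' x"
  then obtain A B where "A \<noteq> []" "B \<noteq> []" "Q = A @ [x', x] @ B"
    unfolding inner_step_def by blast
  hence "rev B \<noteq> [] \<and> rev A \<noteq> [] \<and> rev Q = rev B @ [x, x'] @ rev A" by simp
  thus ?thesis unfolding inner_step_def by blast
qed

lemma inner_step_rev: "inner_step (rev Q) x x' \<longleftrightarrow> inner_step Q x' x"
  using inner_step_revI[of Q x' x] inner_step_revI[of "rev Q" x x'] by auto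

lemma inner_step_split:
  assumes "inner_step Q x x'"
  obtains A B where "A \<noteq> []" "B \<noteq> []" "Q = A @ [x, x'] @ B" "hd Q = hd A" "last Q = last B"
  using assms unfolding inner_step_def by auto

lemma successively_inner_step:
  "Q = as @ X @ bs \<Longrightarrow> as \<noteq> [] \<Longrightarrow> bs \<noteq> [] \<Longrightarrow> successively (inner_step Q) X"
proof (induction X arbitrary: as)
  case (Cons x X)
  show ?case
  proof (cases X)
    case (Cons y Z)
    have "Q = as @ [x, y] @ (Z @ bs)" using Cons.prems(1) Cons by simp
    hence "inner_step Q x y" using Cons.prems(2,3) unfolding inner_step_def by blast
    moreover have "successively (inner_step Q) X"
      using Cons.IH[of "as @ [x]"] Cons.prems by simp
    ultimately show ?thesis using Cons by simp
  qed simp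
qed simp

lemma successively_iff_const:
  assumes "successively (\<lambda>a b. p a \<longleftrightarrow> p b) xs" "x \<in> set xs" "y \<in> set xs"
  shows "p x \<longleftrightarrow> p y"
proof -
  have "\<forall>z\<in>set xs. p z \<longleftrightarrow> p (hd xs)" using assms(1)
  proof (induction xs rule: induct_list012)
    case (3 a b zs)
    have ab: "p a \<longleftrightarrow> p b" and rest: "successively (\<lambda>a b. p a \<longleftrightarrow> p b) (b # zs)"
      using "3.prems" by simp_all
    have "\<forall>z\<in>set (b # zs). p z \<longleftrightarrow> p (hd (b # zs))" by (rule "3.IH"(2)[OF rest])
    with ab show ?case by (metis list.sel(1) set_ConsD)
  qed simp_all
  thus ?thesis using assms(2,3) by blast
qed

lemma successively_partner:
  assumes "successively R xs" "2 \<le> length xs" "x \<in> set xs"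
  shows "\<exists>y\<in>set xs. R x y \<or> R y x"
  using assms
proof (induction xs rule: induct_list012)
  case (3 a b zs)
  show ?case
  proof (cases "x = a \<or> x = b")
    case True thus ?thesis using "3.prems"(1) by auto
  next
    case False
    hence "x \<in> set zs" using "3.prems"(3) by simp
    hence "x \<in> set (b # zs)" "2 \<le> length (b # zs)" by (auto dest: split_list)
    thus ?thesis using "3.IH"(2) "3.prems"(1) by auto
  qed
qed auto

lemma distinct_in_set_tl: "distinct xs \<Longrightarrow> x \<in> set xs \<Longrightarrow> x \<noteq> hd xs \<Longrightarrow> x \<in> set (tl xs)"
  by (cases xs) auto

lemma successively_not_after_first:
  assumes "successively (\<lambda>a b. p b \<longrightarrow> q a) xs" "\<And>a. q a \<Longrightarrow> p a" "\<not> q (hd xs)"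
    "x \<in> set (tl xs)"
  shows "\<not> p x"
  using assms(1,3,4)
proof (induction xs rule: induct_list012)
  case (3 a b zs)
  have "\<not> p b" using "3.prems"(1,2) by simp
  hence "\<not> q b" using assms(2) by blast
  moreover have "x = b \<or> x \<in> set zs" using "3.prems"(3) by simp
  ultimately show ?case using "3.IH"(2) "3.prems"(1) \<open>\<not> p b\<close> by auto
qed auto

section \<open>Canonical path partitions\<close>

lemma path_comp_not_cycle_comp: "path_comp E p \<Longrightarrow> \<not> cycle_comp E p"
  by (simp add: path_comp_def)

lemma bweight_end_vertex: "end_vertex E S y \<Longrightarrow> bweight E S y = 2/3"
  by (simp add: bweight_def)

text \<open>For \<open>x \<in> V\<^sub>2\<close> these are the \<open>V\<^sub>1\<close>-ends of the balanced edges at \<open>x\<close>.\<close>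
definition V1_nbrs :: "('a \<Rightarrow> 'a \<Rightarrow> bool) \<Rightarrow> 'a list set \<Rightarrow> 'a \<Rightarrow> 'a set" where
  "V1_nbrs E S x = {y \<in> V1 E S. free_edge E S x y}"

definition V1_weight :: "('a \<Rightarrow> 'a \<Rightarrow> bool) \<Rightarrow> 'a list set \<Rightarrow> 'a \<Rightarrow> real" where
  "V1_weight E S x = (\<Sum>y\<in>V1_nbrs E S x. bweight E S y)"

locale canonical_partition =
  fixes V :: "'a set" and E :: "'a \<Rightarrow> 'a \<Rightarrow> bool" and S :: "'a list set"
  assumes graph: "graph V E" and canonical: "canonical V E S"
begin

lemma edge_sym: "E u v \<Longrightarrow> E v u"
  using graph by (auto simp: graph_def)

lemma edge_in_V: "E u v \<Longrightarrow> v \<in> V"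
  using graph by (auto simp: graph_def)

lemma ham_path_swap: "ham_path E A y z \<Longrightarrow> ham_path E A z y"
proof (rule ham_path_sym)
  show "\<And>u v. E u v \<Longrightarrow> E v u" by (rule edge_sym)
qed

lemma finite_V: "finite V"
  using graph by (simp add: graph_def)

lemma path_partition_S: "path_partition V E S"
  using canonical by (simp add: canonical_def)

lemma component_is_path: "p \<in> S \<Longrightarrow> is_path E p"
  using path_partition_S by (simp add: path_partition_def)

lemma component_subset: "p \<in> S \<Longrightarrow> set p \<subseteq> V"
  using path_partition_S by (simp add: path_partition_def)

lemma components_disjoint: "p \<in> S \<Longrightarrow> q \<in> S \<Longrightarrow> p \<noteq> q \<Longrightarrow> set p \<inter> set q = {}"
  using path_partition_S by (simp add: path_partition_def)

lemma component_unique: "p \<in> S \<Longrightarrow> q \<in> S \<Longrightarrow> v \<in> set p \<Longrightarrow> v \<in> set q \<Longrightarrow> p = q"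
  using components_disjoint by blast

lemma components_cover: "\<Union>(set ` S) = V"
  using path_partition_S by (simp add: path_partition_def)

lemma finite_components: "finite S"
proof -
  have "inj_on set S"
  proof (rule inj_onI)
    fix p q assume "p \<in> S" "q \<in> S" "set p = set q"
    moreover have "p \<noteq> []" using component_is_path[OF \<open>p \<in> S\<close>] by (simp add: is_path_def)
    ultimately show "p = q" using components_disjoint by fastforce
  qed
  moreover have "finite (set ` S)"
    using component_subset finite_V by (meson finite_Pow_iff finite_subset image_subsetI PowI)
  ultimately show ?thesis using finite_imageD by blast
qed

lemma component_cases: "p \<in> S \<Longrightarrow> path_comp E p \<or> cycle_comp E p"
proof -
  assume p: "p \<in> S"
  have "length p \<noteq> 0" using component_is_path[OF p] by (simp add: is_path_def)
  moreover have "length p \<noteq> 1" using canonical p by (simp add: canonical_def)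
  ultimately have "2 \<le> length p" by linarith
  thus ?thesis by (auto simp: path_comp_def)
qed

lemma replacement_partition:
  assumes R: "R \<subseteq> S" and N: "\<forall>n\<in>N. is_path E n" "\<forall>n\<in>N. \<forall>m\<in>N. n \<noteq> m \<longrightarrow> set n \<inter> set m = {}"
    and same: "\<Union>(set ` N) = \<Union>(set ` R)"
  shows "path_partition V E ((S - R) \<union> N)" "N \<inter> (S - R) = {}"
proof -
  have apart: "set p \<inter> set n = {}" if "p \<in> S - R" "n \<in> N" for p n
  proof -
    have "\<forall>r\<in>R. set p \<inter> set r = {}" using that(1) R components_disjoint by blast
    thus ?thesis using same that(2) by blast
  qed
  show "N \<inter> (S - R) = {}"
  proof (rule ccontr)
    assume "N \<inter> (S - R) \<noteq> {}"
    then obtain n where "n \<in> N" "n \<in> S - R" by blast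
    moreover have "n \<noteq> []" using N(1) \<open>n \<in> N\<close> by (simp add: is_path_def)
    ultimately show False using apart[of n n] by simp
  qed
  show "path_partition V E ((S - R) \<union> N)"
    unfolding path_partition_def
  proof (intro conjI ballI impI)
    fix p assume "p \<in> (S - R) \<union> N"
    thus "is_path E p" using N(1) component_is_path by blast
    show "set p \<subseteq> V"
      using \<open>p \<in> (S - R) \<union> N\<close> same R component_subset by blast
  next
    fix p q assume "p \<in> (S - R) \<union> N" "q \<in> (S - R) \<union> N" "p \<noteq> q"
    thus "set p \<inter> set q = {}"
      using N(2) components_disjoint apart apart[of q p] by blast
  next
    show "\<Union>(set ` ((S - R) \<union> N)) = V"
      using same R components_cover by blast
  qed
qed

text \<open>The two optimality conditions of canonicity are used only through the next two
  lemmas, for a set \<open>R\<close> of components replaced by paths \<open>N\<close> on the same vertices.\<close>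

context
  fixes R N
  assumes R: "R \<subseteq> S" and N: "finite N" "\<forall>n\<in>N. is_path E n"
    "\<forall>n\<in>N. \<forall>m\<in>N. n \<noteq> m \<longrightarrow> set n \<inter> set m = {}"
    and same: "\<Union>(set ` N) = \<Union>(set ` R)"
begin

lemma card_replacement: "card ((S - R) \<union> N) = card S - card R + card N" "card R \<le> card S"
proof -
  have "finite R" using R finite_components finite_subset by blast
  thus "card R \<le> card S" using R finite_components card_mono by blast
  have "card ((S - R) \<union> N) = card (S - R) + card N"
    using replacement_partition(2)[OF R N(2,3) same] N(1) finite_components
    by (subst card_Un_disjoint) auto
  thus "card ((S - R) \<union> N) = card S - card R + card N"
    using R \<open>finite R\<close> by (simp add: card_Diff_subset)
qed

lemma card_le_replacement: "card R \<le> card N"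
  using canonical replacement_partition(1)[OF R N(2,3) same] card_replacement
  unfolding canonical_def by fastforce

lemma cycles_le_replacement:
  assumes "card N = card R"
  shows "card {n\<in>N. cycle_comp E n} \<le> card {r\<in>R. cycle_comp E r}"
proof -
  let ?S' = "(S - R) \<union> N" and ?C = "\<lambda>A. {p\<in>A. cycle_comp E p}"
  have "card ?S' = card S" using card_replacement assms by simp
  hence "num_cycles E ?S' \<le> num_cycles E S"
    using canonical replacement_partition(1)[OF R N(2,3) same] by (simp add: canonical_def)
  moreover have "num_cycles E ?S' = card (?C (S - R)) + card (?C N)"
  proof -
    have "?C ?S' = ?C (S - R) \<union> ?C N" by auto
    moreover have "card (?C (S - R) \<union> ?C N) = card (?C (S - R)) + card (?C N)"
      using replacement_partition(2)[OF R N(2,3) same] N(1) finite_components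
      by (intro card_Un_disjoint) auto
    ultimately show ?thesis unfolding num_cycles_def by simp
  qed
  moreover have "num_cycles E S = card (?C (S - R)) + card (?C R)"
  proof -
    have "?C S = ?C (S - R) \<union> ?C R" using R by auto
    moreover have "card (?C (S - R) \<union> ?C R) = card (?C (S - R)) + card (?C R)"
      using R finite_components by (intro card_Un_disjoint) (auto intro: rev_finite_subset)
    ultimately show ?thesis unfolding num_cycles_def by simp
  qed
  ultimately show ?thesis by linarith
qed

end

lemma V1_in_path_comp:
  assumes K: "K \<in> S" "path_comp E K" and z: "z \<in> V1 E S" "z \<in> set K"
  shows "z \<in> {hd K, last K}"
proof -
  have "\<not> in_cycle E S z"
    using K z(2) component_unique path_comp_not_cycle_comp unfolding in_cycle_def by blast
  then obtain Q where Q: "Q \<in> S" "path_comp E Q" "z \<in> {hd Q, last Q}"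
    using z(1) unfolding V1_def end_vertex_def by auto
  have "Q \<noteq> []" using component_is_path[OF Q(1)] by (simp add: is_path_def)
  hence "z \<in> set Q" using Q(3) by auto
  thus ?thesis using Q K z(2) component_unique by blast
qed

lemma path_comp_ends_ham_path:
  assumes K: "K \<in> S" and uv: "u \<in> {hd K, last K}" "v \<in> {hd K, last K}" "u \<noteq> v"
  shows "ham_path E (set K) u v"
proof -
  have "ham_path E (set K) (hd K) (last K)"
    using component_is_path[OF K] by (rule ham_path_hd_last)
  thus ?thesis using uv ham_path_swap by blast
qed

lemma V1_ham_path_to:
  assumes K: "K \<in> S" and z: "z \<in> V1 E S" "z \<in> set K"
  obtains u where "ham_path E (set K) u z"
proof (cases "path_comp E K")
  case True
  have "hd K \<noteq> last K"
    using component_is_path[OF K] True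
    by (intro distinct_hd_neq_last) (auto simp: path_comp_def is_path_def)
  moreover have zK: "z \<in> {hd K, last K}" using V1_in_path_comp[OF K True z] .
  define u where "u = (if z = hd K then last K else hd K)"
  ultimately have "u \<in> {hd K, last K}" "u \<noteq> z" by (auto simp: u_def)
  thus ?thesis using that path_comp_ends_ham_path[OF K _ zK] by blast
next
  case False
  hence "spanning_cycle E (set K)" using component_cases[OF K] by (simp add: cycle_comp_def)
  then obtain u1 u2 where "ham_path E (set K) u1 z"
    using spanning_cycle_two_ham_paths[of E "set K" z] edge_sym z(2) by blast
  thus ?thesis by (rule that)
qed

lemma bweight_cycle:
  assumes C: "C \<in> S" "cycle_comp E C" "y \<in> set C"
  shows "bweight E S y = (if length C \<le> 6 then 1 / real (length C) else 0)"
proof -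
  have "\<not> end_vertex E S y"
  proof
    assume "end_vertex E S y"
    then obtain Q where Q: "Q \<in> S" "path_comp E Q" "y = hd Q \<or> y = last Q"
      unfolding end_vertex_def by blast
    have "Q \<noteq> []" using component_is_path[OF Q(1)] by (simp add: is_path_def)
    hence "y \<in> set Q" using Q(3) by auto
    hence "Q = C" using Q(1) C component_unique by blast
    thus False using Q(2) C(2) path_comp_not_cycle_comp by blast
  qed
  moreover have "(SOME p. p \<in> S \<and> cycle_comp E p \<and> y \<in> set p) = C"
    using C component_unique by (intro some_equality) auto
  ultimately show ?thesis by (simp add: bweight_def)
qed

lemma bweight_in_cycle_le: "in_cycle E S y \<Longrightarrow> bweight E S y \<le> 1/3"
  unfolding in_cycle_def
  by (auto simp: bweight_cycle cycle_comp_def divide_simps)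

lemma finite_V1_nbrs: "finite (V1_nbrs E S x)"
  by (rule finite_subset[OF _ finite_V])
     (auto simp: V1_nbrs_def free_edge_def intro: edge_in_V)

lemma V2_not_V1: "x \<in> V2 V E S \<Longrightarrow> x \<notin> V1 E S"
  by (simp add: V2_def)

lemma V2_V1_nbrs_nonempty: "x \<in> V2 V E S \<Longrightarrow> V1_nbrs E S x \<noteq> {}"
  by (auto simp: V2_def V1_nbrs_def)

lemma b_eq_sum_V1_weight:
  assumes "Y \<subseteq> V2 V E S" "finite Y"
  shows "b V E S Y = (\<Sum>x\<in>Y. V1_weight E S x)"
proof -
  have "{(x, y). x \<in> Y \<and> y \<in> V1 E S \<and> balanced V E S x y} = Sigma Y (V1_nbrs E S)"
    using assms(1) V2_not_V1 unfolding V1_nbrs_def balanced_def by blast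
  hence "b V E S Y = (\<Sum>(x, y)\<in>Sigma Y (V1_nbrs E S). bweight E S y)" by (simp add: b_def)
  also have "\<dots> = (\<Sum>x\<in>Y. V1_weight E S x)"
    unfolding V1_weight_def using assms(2) finite_V1_nbrs by (subst sum.Sigma) auto
  finally show ?thesis .
qed

end

section \<open>Rerouting a path component\<close>

locale canonical_path_component = canonical_partition +
  fixes P :: "'a list"
  assumes P_in: "P \<in> S" and P_path_comp: "path_comp E P"
begin

lemma P_is_path: "is_path E P"
  using component_is_path[OF P_in] .

lemma P_nonempty: "P \<noteq> []"
  using P_is_path by (simp add: is_path_def)

lemma disjoint_P: "K \<in> S \<Longrightarrow> K \<noteq> P \<Longrightarrow> set K \<inter> set P = {}"
  using components_disjoint P_in by blast

text \<open>Statements about consecutive vertices of \<open>P\<close> are made for both readings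
  \<open>Q \<in> {P, rev P}\<close>, so that each exchange argument is proved once and used in either direction.\<close>

lemma oriented_is_path: "Q \<in> {P, rev P} \<Longrightarrow> is_path E Q"
  using P_is_path is_path_rev[of E P] edge_sym by blast

lemma oriented_set: "Q \<in> {P, rev P} \<Longrightarrow> set Q = set P"
  by auto

lemma oriented_length: "Q \<in> {P, rev P} \<Longrightarrow> length Q = length P"
  by auto

lemma oriented_rev: "Q \<in> {P, rev P} \<Longrightarrow> rev Q \<in> {P, rev P}"
  by auto

lemma oriented_ends: "Q \<in> {P, rev P} \<Longrightarrow> {hd Q, last Q} = {hd P, last P}"
  using P_nonempty by (auto simp: hd_rev last_rev)

lemma oriented_path_nbr:
  assumes "Q \<in> {P, rev P}" "Q = A @ [u, v] @ B"
  shows "path_nbr E S u v"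
proof -
  have "\<exists>A B. P = A @ [u, v] @ B \<or> P = A @ [v, u] @ B"
  proof (cases "Q = P")
    case False
    hence "rev P = A @ [u, v] @ B" using assms by auto
    hence "P = rev B @ [v, u] @ rev A" by (metis rev_append rev_rev_ident append_assoc rev.simps)
    thus ?thesis by blast
  qed (use assms in blast)
  then obtain A' B' where "P = A' @ [u, v] @ B' \<or> P = A' @ [v, u] @ B'" by blast
  hence "Suc (length A') < length P \<and>
      ((P ! length A' = u \<and> P ! Suc (length A') = v) \<or> (P ! length A' = v \<and> P ! Suc (length A') = u))"
    by (auto simp: nth_append)
  thus ?thesis unfolding path_nbr_def using P_in P_path_comp by blast
qed

lemma oriented_split:
  assumes "Q \<in> {P, rev P}" "Q = A @ [x, x'] @ B"
  shows "is_path E (A @ [x])" "is_path E (x' # B)" "set (A @ [x]) \<inter> set (x' # B) = {}"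
    "set (A @ [x]) \<union> set (x' # B) = set P" "E x x'"
proof -
  have "is_path E ((A @ [x]) @ (x' # B))" using oriented_is_path[OF assms(1)] assms(2) by simp
  moreover have "is_path E ((A @ [x]) @ (x' # B)) \<longleftrightarrow> is_path E (A @ [x]) \<and> is_path E (x' # B)
      \<and> set (A @ [x]) \<inter> set (x' # B) = {} \<and> E (last (A @ [x])) (hd (x' # B))"
    by (rule is_path_append_iff) simp_all
  ultimately show "is_path E (A @ [x])" "is_path E (x' # B)" "set (A @ [x]) \<inter> set (x' # B) = {}"
    "E x x'"
    by auto
  show "set (A @ [x]) \<union> set (x' # B) = set P" using oriented_set[OF assms(1)] assms(2) by auto
qed

lemma reroute_through_one_component_impossible:
  assumes Q: "Q \<in> {P, rev P}" "Q = A @ [x, x'] @ B"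
    and K: "K \<in> S" "K \<noteq> P" "ham_path E (set K) y z" and e: "E x y" "E x' z"
  shows False
proof -
  obtain L where L: "is_path E L" "set L = set K" "hd L = y" "last L = z"
    using K(3) unfolding ham_path_def by blast
  note parts = oriented_split[OF Q]
  have disj: "set L \<inter> set P = {}" using disjoint_P[OF K(1,2)] L(2) by simp
  have L_ne: "L \<noteq> []" using L(1) by (simp add: is_path_def)
  define n where "n = (A @ [x]) @ L @ (x' # B)"
  have "is_path E (L @ (x' # B))"
  proof (rule is_path_append[OF L(1) parts(2)])
    show "set L \<inter> set (x' # B) = {}" using disj parts(4) by auto
    show "E (last L) (hd (x' # B))" using L(4) e(2) edge_sym by simp
  qed
  hence n: "is_path E n"
    unfolding n_def
  proof (rule is_path_append[OF parts(1)])
    show "set (A @ [x]) \<inter> set (L @ x' # B) = {}" using disj parts(3,4) by auto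
    show "E (last (A @ [x])) (hd (L @ x' # B))" using L(3) L_ne e(1) by simp
  qed
  have "card {P, K} \<le> card {n}"
    using card_le_replacement[of "{P, K}" "{n}"] P_in K(1) n parts(4) L(2) by (auto simp: n_def)
  moreover have "card {P, K} = 2" using K(2) by simp
  ultimately show False by simp
qed


lemma reroute_through_two_components_impossible:
  assumes Q: "Q \<in> {P, rev P}" "Q = A @ [x, x'] @ B"
    and K: "K1 \<in> S" "K2 \<in> S" "K1 \<noteq> P" "K2 \<noteq> P" "K1 \<noteq> K2"
    and ham: "ham_path E (set K1) y y1" "ham_path E (set K2) z2 z" and e: "E x y" "E x' z"
  shows False
proof -
  obtain L1 where L1: "is_path E L1" "set L1 = set K1" "hd L1 = y"
    using ham(1) unfolding ham_path_def by blast
  obtain L2 where L2: "is_path E L2" "set L2 = set K2" "last L2 = z"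
    using ham(2) unfolding ham_path_def by blast
  note parts = oriented_split[OF Q]
  have disj: "set L1 \<inter> set P = {}" "set L2 \<inter> set P = {}" "set L1 \<inter> set L2 = {}"
    using disjoint_P[OF K(1,3)] disjoint_P[OF K(2,4)] components_disjoint[OF K(1,2,5)] L1(2) L2(2)
    by simp_all
  define n1 where "n1 = (A @ [x]) @ L1"
  define n2 where "n2 = L2 @ (x' # B)"
  have n1: "is_path E n1"
    unfolding n1_def
  proof (rule is_path_append[OF parts(1) L1(1)])
    show "set (A @ [x]) \<inter> set L1 = {}" using disj parts(4) by auto
    show "E (last (A @ [x])) (hd L1)" using L1(3) e(1) by simp
  qed
  have n2: "is_path E n2"
    unfolding n2_def
  proof (rule is_path_append[OF L2(1) parts(2)])
    show "set L2 \<inter> set (x' # B) = {}" using disj parts(4) by auto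
    show "E (last L2) (hd (x' # B))" using L2(3) e(2) edge_sym by simp
  qed
  have n12: "set n1 \<inter> set n2 = {}" using disj parts(3,4) by (auto simp: n1_def n2_def)
  hence "n1 \<noteq> n2" using n1 by (auto simp: is_path_def)
  have "card {P, K1, K2} \<le> card {n1, n2}"
    using card_le_replacement[of "{P, K1, K2}" "{n1, n2}"] P_in K(1,2) n1 n2 n12 parts(4) L1(2) L2(2)
    by (auto simp: n1_def n2_def)
  moreover have "card {P, K1, K2} = 3" "card {n1, n2} \<le> 2" using K(3-5) by (auto simp: card_insert_if)
  ultimately show False by simp
qed

lemma reversed_tail_path:
  assumes Q: "Q \<in> {P, rev P}" "Q = A @ [x, x'] @ B" and B: "B \<noteq> []" and e: "E x (last B)"
  shows "is_path E ((A @ [x]) @ (rev B @ [x']))" "set ((A @ [x]) @ (rev B @ [x'])) = set P"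
proof -
  note parts = oriented_split[OF Q]
  have "is_path E ([x'] @ B) \<longleftrightarrow> is_path E [x'] \<and> is_path E B \<and> set [x'] \<inter> set B = {}
      \<and> E (last [x']) (hd B)"
    using B by (rule is_path_append_iff[rotated]) simp
  hence tail: "is_path E B" "x' \<notin> set B" "E x' (hd B)" using parts(2) by auto
  have "is_path E (rev B @ [x'])"
  proof (rule is_path_append)
    show "is_path E (rev B)" using edge_sym tail(1) by (rule is_path_rev)
    show "E (last (rev B)) (hd [x'])" using tail(3) B edge_sym by (simp add: last_rev)
  qed (use tail(2) in auto)
  thus "is_path E ((A @ [x]) @ (rev B @ [x']))"
  proof (rule is_path_append[OF parts(1)])
    show "set (A @ [x]) \<inter> set (rev B @ [x']) = {}" using parts(3) by auto
    show "E (last (A @ [x])) (hd (rev B @ [x']))" using e B by (simp add: hd_rev)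
  qed
  show "set ((A @ [x]) @ (rev B @ [x'])) = set P" using parts(4) by auto
qed

lemma closing_chords_impossible:
  assumes Q: "Q \<in> {P, rev P}" "Q = A @ [x, x'] @ B" and AB: "A \<noteq> []" "B \<noteq> []"
    and e: "E x (last B)" "E x' (hd A)"
  shows False
proof -
  note c = reversed_tail_path[OF Q AB(2) e(1)]
  have len: "0 < length A" "0 < length B" using AB by simp_all
  have "length ((A @ [x]) @ (rev B @ [x'])) = length A + length B + 2" by simp
  hence "3 \<le> length ((A @ [x]) @ (rev B @ [x']))" using len by linarith
  moreover have "E (last ((A @ [x]) @ (rev B @ [x']))) (hd ((A @ [x]) @ (rev B @ [x'])))"
    using e(2) AB(1) by simp
  ultimately have "cyclic_path E ((A @ [x]) @ (rev B @ [x']))"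
    using c(1) unfolding cyclic_path_def by blast
  hence "spanning_cycle E (set P)" using c(2) spanning_cycle_iff by blast
  moreover have "length P = length A + length B + 2"
    using oriented_length[OF Q(1)] Q(2) by simp
  hence "3 \<le> length P" using len by linarith
  ultimately have "cycle_comp E P" by (simp add: cycle_comp_def)
  thus False using P_path_comp path_comp_not_cycle_comp by blast
qed


lemma reroute_reversed_tail_impossible:
  assumes Q: "Q \<in> {P, rev P}" "Q = A @ [x, x'] @ B" and B: "B \<noteq> []" and e: "E x (last B)"
    and K: "K \<in> S" "K \<noteq> P" "ham_path E (set K) z z'" and e': "E x' z"
  shows False
proof -
  obtain L where L: "is_path E L" "set L = set K" "hd L = z"
    using K(3) unfolding ham_path_def by blast
  note c = reversed_tail_path[OF Q B e]
  define n where "n = ((A @ [x]) @ (rev B @ [x'])) @ L"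
  have n: "is_path E n"
    unfolding n_def
  proof (rule is_path_append[OF c(1) L(1)])
    show "set ((A @ [x]) @ (rev B @ [x'])) \<inter> set L = {}"
      using c(2) L(2) disjoint_P[OF K(1,2)] by auto
    show "E (last ((A @ [x]) @ (rev B @ [x']))) (hd L)" using L(3) e' by simp
  qed
  have "card {P, K} \<le> card {n}"
    using card_le_replacement[of "{P, K}" "{n}"] P_in K(1) n c(2) L(2) by (auto simp: n_def)
  moreover have "card {P, K} = 2" using K(2) by simp
  ultimately show False by simp
qed

lemma split_off_cycle_impossible:
  assumes Q: "Q \<in> {P, rev P}" "Q = A @ [x, x'] @ B" and A: "2 \<le> length A" and e: "E x (hd A)"
    and K: "K \<in> S" "K \<noteq> P" "path_comp E K" "ham_path E (set K) z2 z" and e': "E x' z"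
  shows False
proof -
  obtain L where L: "is_path E L" "set L = set K" "last L = z"
    using K(4) unfolding ham_path_def by blast
  note parts = oriented_split[OF Q]
  define n1 where "n1 = A @ [x]"
  define n2 where "n2 = L @ (x' # B)"
  have "cyclic_path E n1"
    using parts(1) A e unfolding n1_def cyclic_path_def by (cases A) auto
  hence cyc: "cycle_comp E n1"
    unfolding cycle_comp_def using spanning_cycle_iff by (auto simp: cyclic_path_def)
  have n2: "is_path E n2"
    unfolding n2_def
  proof (rule is_path_append[OF L(1) parts(2)])
    show "set L \<inter> set (x' # B) = {}" using L(2) disjoint_P[OF K(1,2)] parts(4) by auto
    show "E (last L) (hd (x' # B))" using L(3) e' edge_sym by simp
  qed
  have n12: "set n1 \<inter> set n2 = {}"
    using parts(3,4) L(2) disjoint_P[OF K(1,2)] by (auto simp: n1_def n2_def)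
  hence "n1 \<noteq> n2" using n2 by (auto simp: is_path_def)
  hence "card {n1, n2} = card {P, K}" using K(2) by simp
  hence "card {n\<in>{n1, n2}. cycle_comp E n} \<le> card {r\<in>{P, K}. cycle_comp E r}"
    using cycles_le_replacement[of "{P, K}" "{n1, n2}"] P_in K(1) parts(1,4) n2 n12 L(2)
    by (auto simp: n1_def n2_def)
  moreover have "card {r\<in>{P, K}. cycle_comp E r} = 0"
    using P_path_comp K(3) path_comp_not_cycle_comp by auto
  moreover have "0 < card {n\<in>{n1, n2}. cycle_comp E n}" using cyc by (auto simp: card_gt_0_iff)
  ultimately show False by linarith
qed


section \<open>Neighbours of consecutive vertices\<close>

definition other_end :: "'a \<Rightarrow> bool" where
  "other_end y \<longleftrightarrow> (\<exists>K\<in>S. K \<noteq> P \<and> path_comp E K \<and> y \<in> {hd K, last K})"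

lemma V1_nbrsD: "y \<in> V1_nbrs E S x \<Longrightarrow> E x y \<and> \<not> path_nbr E S x y \<and> y \<in> V1 E S"
  by (simp add: V1_nbrs_def free_edge_def)

lemma V1_on_P: "y \<in> V1 E S \<Longrightarrow> y \<in> set P \<Longrightarrow> y \<in> {hd P, last P}"
  using V1_in_path_comp[OF P_in P_path_comp] .

lemma V1_off_P:
  assumes "y \<in> V1 E S" "y \<notin> set P"
  obtains K u where "K \<in> S" "K \<noteq> P" "y \<in> set K" "ham_path E (set K) u y"
proof -
  have ne: "p \<noteq> []" if "p \<in> S" for p using component_is_path[OF that] by (simp add: is_path_def)
  have "(\<exists>p\<in>S. y = hd p \<or> y = last p) \<or> (\<exists>p\<in>S. y \<in> set p)"
    using assms(1) unfolding V1_def end_vertex_def in_cycle_def by blast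
  hence "\<exists>K\<in>S. y \<in> set K" using ne by (metis hd_in_set last_in_set)
  then obtain K where "K \<in> S" "y \<in> set K" by blast
  moreover have "K \<noteq> P" using assms(2) calculation(2) by blast
  ultimately show ?thesis using that V1_ham_path_to assms(1) by metis
qed

lemma other_end_ham_path:
  assumes "other_end y"
  obtains K y' where "K \<in> S" "K \<noteq> P" "path_comp E K" "y \<in> {hd K, last K}"
    "ham_path E (set K) y y'"
proof -
  obtain K where K: "K \<in> S" "K \<noteq> P" "path_comp E K" "y \<in> {hd K, last K}"
    using assms unfolding other_end_def by blast
  have "hd K \<noteq> last K"
    using component_is_path[OF K(1)] K(3)
    by (intro distinct_hd_neq_last) (auto simp: path_comp_def is_path_def)
  moreover define y' where "y' = (if y = hd K then last K else hd K)"
  ultimately have "y' \<in> {hd K, last K}" "y \<noteq> y'" using K(4) by (auto simp: y'_def)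
  thus ?thesis using that K path_comp_ends_ham_path[OF K(1) K(4)] by blast
qed

lemma V1_nbr_beyond_next:
  assumes Q: "Q \<in> {P, rev P}" "Q = A @ [x, x'] @ B" and B: "B \<noteq> []"
    and z: "last B \<in> V1_nbrs E S x'"
  shows "2 \<le> length B"
proof (rule ccontr)
  assume "\<not> 2 \<le> length B"
  then obtain b where "B = [b]" using B by (cases B; cases "tl B") auto
  hence "Q = (A @ [x]) @ [x', last B] @ []" using Q(2) by simp
  thus False using oriented_path_nbr[OF Q(1)] V1_nbrsD[OF z] by blast
qed

lemma other_end_nbr_off_P:
  assumes Q: "Q \<in> {P, rev P}" "inner_step Q x x'"
    and y: "y \<in> V1_nbrs E S x" "other_end y" and z: "z \<in> V1_nbrs E S x'"
  shows "z \<notin> set P"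
proof
  assume "z \<in> set P"
  hence "z = hd Q \<or> z = last Q" using V1_on_P V1_nbrsD[OF z] oriented_ends[OF Q(1)] by blast
  moreover obtain A B where AB: "A \<noteq> []" "B \<noteq> []" "Q = A @ [x, x'] @ B" "hd Q = hd A"
    "last Q = last B"
    using Q(2) by (rule inner_step_split)
  moreover obtain K y' where K: "K \<in> S" "K \<noteq> P" "path_comp E K" "ham_path E (set K) y y'"
    using y(2) by (rule other_end_ham_path)
  moreover have ey: "E x y" and ez: "E x' z" using V1_nbrsD y(1) z by auto
  moreover have rQ: "rev Q \<in> {P, rev P}" "rev Q = rev B @ [x', x] @ rev A"
    using oriented_rev[OF Q(1)] AB(3) by simp_all
  ultimately show False
  proof (elim disjE)
    assume "z = hd Q"
    hence "E x' (last (rev A))" using ez AB(1,4) by (simp add: last_rev)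
    thus False using reroute_reversed_tail_impossible[OF rQ _ _ K(1,2,4) ey] AB(1) by simp
  next
    assume "z = last Q"
    hence "2 \<le> length (rev B)" "E x' (hd (rev B))"
      using V1_nbr_beyond_next[OF Q(1) AB(3,2)] z ez AB(2,5) by (simp_all add: hd_rev)
    thus False using split_off_cycle_impossible[OF rQ _ _ K(1-3) ham_path_swap[OF K(4)] ey] by simp
  qed
qed

lemma other_end_nbr_unique:
  assumes Q: "Q \<in> {P, rev P}" "inner_step Q x x'"
    and y: "y \<in> V1_nbrs E S x" "other_end y" and z: "z \<in> V1_nbrs E S x'"
  shows "z = y"
proof (rule ccontr)
  assume zy: "z \<noteq> y"
  obtain A B where AB: "Q = A @ [x, x'] @ B" using Q(2) by (rule inner_step_split)
  obtain K y' where K: "K \<in> S" "K \<noteq> P" "path_comp E K" "y \<in> {hd K, last K}"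
    "ham_path E (set K) y y'"
    using y(2) by (rule other_end_ham_path)
  have ey: "E x y" and ez: "E x' z" using V1_nbrsD y(1) z by auto
  obtain K' u where K': "K' \<in> S" "K' \<noteq> P" "z \<in> set K'" "ham_path E (set K') u z"
    using V1_off_P[OF _ other_end_nbr_off_P[OF assms]] V1_nbrsD[OF z] by blast
  show False
  proof (cases "K' = K")
    case True
    hence "z \<in> {hd K, last K}" using V1_in_path_comp[OF K(1,3)] V1_nbrsD[OF z] K'(3) by blast
    hence "ham_path E (set K) y z" using path_comp_ends_ham_path[OF K(1,4)] zy by blast
    thus False using reroute_through_one_component_impossible[OF Q(1) AB K(1,2) _ ey ez] by blast
  next
    case False
    thus False
      using reroute_through_two_components_impossible[OF Q(1) AB K(1) K'(1) K(2) K'(2) _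
          K(5) K'(4) ey ez] by blast
  qed
qed

lemma last_end_nbr_unique:
  assumes Q: "Q \<in> {P, rev P}" "inner_step Q x x'"
    and y: "last Q \<in> V1_nbrs E S x" and z: "z \<in> V1_nbrs E S x'"
  shows "z = last Q"
proof (rule ccontr)
  assume zl: "z \<noteq> last Q"
  obtain A B where AB: "A \<noteq> []" "B \<noteq> []" "Q = A @ [x, x'] @ B" "hd Q = hd A" "last Q = last B"
    using Q(2) by (rule inner_step_split)
  have ey: "E x (last B)" and ez: "E x' z" using V1_nbrsD y z AB(5) by auto
  show False
  proof (cases "z \<in> set P")
    case True
    hence "z = hd Q" using zl V1_on_P V1_nbrsD[OF z] oriented_ends[OF Q(1)] by blast
    thus False using closing_chords_impossible[OF Q(1) AB(3) AB(1,2) ey] ez AB(4) by simp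
  next
    case False
    obtain K u where K: "K \<in> S" "K \<noteq> P" "ham_path E (set K) u z"
      using V1_off_P[OF _ False] V1_nbrsD[OF z] by blast
    thus False
      using reroute_reversed_tail_impossible[OF Q(1) AB(3) AB(2) ey K(1,2) ham_path_swap[OF K(3)] ez]
      by blast
  qed
qed

lemma cycle_nbrs_common_cycle:
  assumes Q: "Q \<in> {P, rev P}" "inner_step Q x x'"
    and y: "y \<in> V1_nbrs E S x" "in_cycle E S y" and z: "z \<in> V1_nbrs E S x'" "in_cycle E S z"
  obtains C where "C \<in> S" "cycle_comp E C" "y \<in> set C" "z \<in> set C" "\<not> ham_path E (set C) y z"
proof -
  obtain A B where AB: "Q = A @ [x, x'] @ B"
    using Q(2) by (rule inner_step_split)
  obtain C D where C: "C \<in> S" "cycle_comp E C" "y \<in> set C" and D: "D \<in> S" "cycle_comp E D" "z \<in> set D"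
    using y(2) z(2) unfolding in_cycle_def by blast
  have CD: "C \<noteq> P" "D \<noteq> P" using C(2) D(2) P_path_comp path_comp_not_cycle_comp by auto
  have ey: "E x y" and ez: "E x' z" using V1_nbrsD y(1) z(1) by auto
  obtain u where u: "ham_path E (set C) u y" using V1_ham_path_to[OF C(1) _ C(3)] V1_nbrsD[OF y(1)] by blast
  obtain v where v: "ham_path E (set D) v z" using V1_ham_path_to[OF D(1) _ D(3)] V1_nbrsD[OF z(1)] by blast
  have "C = D"
    using reroute_through_two_components_impossible[OF Q(1) AB C(1) D(1) CD _ ham_path_swap[OF u] v ey ez]
    by blast
  moreover have "\<not> ham_path E (set C) y z"
    using reroute_through_one_component_impossible[OF Q(1) AB C(1) CD(1) _ ey ez] by blast
  ultimately show ?thesis using that C D by blast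
qed


section \<open>Weights\<close>

lemma P_ends_end_vertex: "y \<in> {hd P, last P} \<Longrightarrow> end_vertex E S y"
  unfolding end_vertex_def using P_in P_path_comp by blast

lemma oriented_hd_end_vertex:
  assumes "Q \<in> {P, rev P}"
  shows "end_vertex E S (hd Q)"
proof -
  have "hd Q \<in> {hd P, last P}" using oriented_ends[OF assms] by blast
  thus ?thesis by (rule P_ends_end_vertex)
qed

lemma other_end_end_vertex: "other_end y \<Longrightarrow> end_vertex E S y"
  unfolding other_end_def end_vertex_def by blast

lemma V1_nbr_cases:
  assumes "y \<in> V1_nbrs E S x" "\<not> other_end y"
  shows "y \<in> {hd P, last P} \<or> in_cycle E S y"
proof -
  have "end_vertex E S y \<or> in_cycle E S y" using assms(1) by (simp add: V1_nbrs_def V1_def)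
  thus ?thesis
  proof
    assume "end_vertex E S y"
    then obtain K where "K \<in> S" "path_comp E K" "y = hd K \<or> y = last K"
      unfolding end_vertex_def by blast
    thus ?thesis using assms(2) unfolding other_end_def by (cases "K = P") auto
  qed simp
qed

lemma card_V1_nbrs_le:
  assumes d: "regular V E d" and x: "x \<in> V2 V E S" "x \<in> set P"
  shows "card (V1_nbrs E S x) + 2 \<le> d"
proof -
  have "x \<notin> {hd P, last P}" using x V2_not_V1 P_ends_end_vertex by (auto simp: V1_def)
  moreover obtain A B where "P = A @ x # B" using split_list[OF x(2)] by blast
  ultimately have AB: "P = A @ x # B" "A \<noteq> []" "B \<noteq> []" by auto
  have PA: "P = butlast A @ [last A, x] @ B" and PB: "P = A @ [x, hd B] @ tl B" using AB by simp_all
  have nb: "path_nbr E S x (last A)" "path_nbr E S x (hd B)"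
    using oriented_path_nbr[of P, OF _ PA] oriented_path_nbr[of P, OF _ PB]
    by (auto simp: path_nbr_def)
  have "E (last A) x" "E x (hd B)"
    using oriented_split(5)[of P, OF _ PA] oriented_split(5)[of P, OF _ PB] by simp_all
  hence adj: "{last A, hd B} \<subseteq> {u. E x u}" using edge_sym by auto
  have "distinct P" using P_is_path by (simp add: is_path_def)
  hence "last A \<noteq> hd B" using AB(1) last_in_set[OF AB(2)] hd_in_set[OF AB(3)] by auto
  moreover have fin: "finite {u. E x u}" using finite_V edge_in_V by (blast intro: rev_finite_subset)
  moreover have "card {u. E x u} = d" using d x(1) by (simp add: regular_def V2_def)
  ultimately have "card ({u. E x u} - {last A, hd B}) + 2 = d"
    using adj card_mono[OF fin adj] by (simp add: card_Diff_subset)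
  moreover have "V1_nbrs E S x \<subseteq> {u. E x u} - {last A, hd B}"
    using nb V1_nbrsD by blast
  hence "card (V1_nbrs E S x) \<le> card ({u. E x u} - {last A, hd B})"
    using fin by (intro card_mono) auto
  ultimately show ?thesis by linarith
qed

lemma V1_weight_split:
  "V1_weight E S x = 2/3 * card (V1_nbrs E S x \<inter> {hd P, last P})
     + (\<Sum>y\<in>V1_nbrs E S x - {hd P, last P}. bweight E S y)"
proof -
  have "(\<Sum>y\<in>V1_nbrs E S x \<inter> {hd P, last P}. bweight E S y)
      = (\<Sum>y\<in>V1_nbrs E S x \<inter> {hd P, last P}. 2/3)"
    by (intro sum.cong refl bweight_end_vertex P_ends_end_vertex) blast
  hence "(\<Sum>y\<in>V1_nbrs E S x \<inter> {hd P, last P}. bweight E S y)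
      = 2/3 * card (V1_nbrs E S x \<inter> {hd P, last P})" by simp
  moreover have "V1_weight E S x = (\<Sum>y\<in>V1_nbrs E S x \<inter> {hd P, last P}. bweight E S y)
      + (\<Sum>y\<in>V1_nbrs E S x - {hd P, last P}. bweight E S y)"
    unfolding V1_weight_def by (rule sum.Int_Diff[OF finite_V1_nbrs])
  ultimately show ?thesis by simp
qed

lemma V1_weight_le_two:
  assumes "regular V E 6" "x \<in> V2 V E S" "x \<in> set P" "\<forall>y\<in>V1_nbrs E S x. \<not> other_end y"
  shows "V1_weight E S x \<le> 2"
proof -
  let ?N = "V1_nbrs E S x"
  have "(\<Sum>y\<in>?N - {hd P, last P}. bweight E S y) \<le> (\<Sum>y\<in>?N - {hd P, last P}. 1/3)"
    using V1_nbr_cases assms(4) bweight_in_cycle_le by (intro sum_mono) blast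
  moreover have "card (?N \<inter> {hd P, last P}) + card (?N - {hd P, last P}) = card ?N"
    by (rule card_Int_Diff[OF finite_V1_nbrs, symmetric])
  moreover have "card (?N \<inter> {hd P, last P}) \<le> card {hd P, last P}" by (rule card_mono) auto
  hence "card (?N \<inter> {hd P, last P}) \<le> 2" by (simp add: card_insert_if split: if_splits)
  moreover have "card ?N \<le> 4" using card_V1_nbrs_le[OF assms(1-3)] by simp
  ultimately show ?thesis using V1_weight_split[of x] by simp
qed

lemma V1_weight_le_cycle:
  assumes no_other: "\<forall>y\<in>V1_nbrs E S x. \<not> other_end y"
    and D: "D \<in> S" "cycle_comp E D" "z \<in> set D"
    and cyc: "\<forall>y\<in>V1_nbrs E S x. in_cycle E S y \<longrightarrow> y \<in> set D \<and> \<not> ham_path E (set D) y z"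
  shows "V1_weight E S x \<le> 2/3 * card (V1_nbrs E S x \<inter> {hd P, last P}) + 2/3"
proof -
  let ?R = "V1_nbrs E S x - {hd P, last P}" and ?w = "if length D \<le> 6 then 1 / real (length D) else 0"
  obtain u1 u2 where u: "u1 \<noteq> u2" "u1 \<in> set D" "u2 \<in> set D"
      "ham_path E (set D) u1 z" "ham_path E (set D) u2 z"
    using spanning_cycle_two_ham_paths[of E "set D" z] edge_sym D by (auto simp: cycle_comp_def)
  have sub: "?R \<subseteq> set D - {u1, u2}" using cyc V1_nbr_cases no_other u(4,5) by blast
  have "card ?R \<le> length D - 2"
    using card_mono[OF _ sub] u component_is_path[OF D(1)]
    by (simp add: card_Diff_subset distinct_card is_path_def)
  moreover have L3: "3 \<le> length D" using D(2) by (simp add: cycle_comp_def)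
  ultimately have "real (card ?R) * ?w \<le> 2/3"
  proof (cases "length D \<le> 6")
    case True
    have "3 * card ?R \<le> 2 * length D" using \<open>card ?R \<le> length D - 2\<close> L3 True by linarith
    hence "3 * real (card ?R) \<le> 2 * real (length D)" by (metis of_nat_le_iff of_nat_mult of_nat_numeral)
    moreover have "0 < real (length D)" using L3 by linarith
    ultimately show ?thesis using True by (simp add: pos_divide_le_eq mult.commute)
  qed simp
  moreover have "(\<Sum>y\<in>?R. bweight E S y) = (\<Sum>y\<in>?R. ?w)"
    using sub bweight_cycle[OF D(1,2)] by (intro sum.cong) auto
  hence "(\<Sum>y\<in>?R. bweight E S y) = real (card ?R) * ?w" by simp
  ultimately show ?thesis using V1_weight_split[of x] by simp
qed


lemma oriented_infix_interior:
  assumes Q: "Q \<in> {P, rev P}" "Q = as @ X @ bs" and X: "X \<noteq> []" "set X \<subseteq> V2 V E S"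
  shows "as \<noteq> []" "bs \<noteq> []"
proof -
  have "hd Q \<in> V1 E S" "last Q \<in> V1 E S"
    using oriented_ends[OF Q(1)] P_ends_end_vertex by (auto simp: V1_def)
  moreover have "hd X \<in> V2 V E S" "last X \<in> V2 V E S" using X by auto
  hence "hd X \<notin> V1 E S" "last X \<notin> V1 E S" using V2_not_V1 by blast+
  ultimately show "as \<noteq> []" "bs \<noteq> []"
  proof -
    assume hd: "hd Q \<in> V1 E S" "hd X \<notin> V1 E S"
    show "as \<noteq> []"
    proof
      assume "as = []"
      hence "hd Q = hd X" using Q(2) X(1) by simp
      thus False using hd by simp
    qed
  next
    assume last: "last Q \<in> V1 E S" "last X \<notin> V1 E S"
    show "bs \<noteq> []"
    proof
      assume "bs = []"
      hence "last Q = last X" using Q(2) X(1) by simp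
      thus False using last by simp
    qed
  qed
qed

lemma oriented_infix_distinct:
  assumes "Q \<in> {P, rev P}" "Q = as @ X @ bs"
  shows "distinct X"
proof -
  have "distinct Q" using oriented_is_path[OF assms(1)] by (simp add: is_path_def)
  thus ?thesis using assms(2) by simp
qed

lemma oriented_inner_step:
  assumes "Q \<in> {P, rev P}" "inner_step Q u v \<or> inner_step Q v u"
  obtains Q' where "Q' \<in> {P, rev P}" "inner_step Q' u v"
proof (cases "inner_step Q u v")
  case False
  hence "inner_step (rev Q) u v" using assms(2) by (simp add: inner_step_rev)
  thus ?thesis using that oriented_rev[OF assms(1)] by blast
qed (use that assms(1) in blast)

lemma other_end_nbr_adjacent:
  assumes Q: "Q \<in> {P, rev P}" "inner_step Q u v \<or> inner_step Q v u"
    and v: "v \<in> V2 V E S" and y: "y \<in> V1_nbrs E S u" "other_end y"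
  shows "V1_nbrs E S v = {y}"
proof -
  obtain Q' where Q': "Q' \<in> {P, rev P}" "inner_step Q' u v"
    using Q by (rule oriented_inner_step)
  have "V1_nbrs E S v \<subseteq> {y}" using other_end_nbr_unique[OF Q' y] by blast
  thus ?thesis using V2_V1_nbrs_nonempty[OF v] by blast
qed

lemma sum_V1_weight_other_end:
  assumes X: "P = as @ X @ bs" "set X \<subseteq> V2 V E S" "2 \<le> length X"
    and y: "x0 \<in> set X" "y \<in> V1_nbrs E S x0" "other_end y"
  shows "(\<Sum>x\<in>set X. V1_weight E S x) = 2/3 * length X"
proof -
  have PP: "P \<in> {P, rev P}" by simp
  have "X \<noteq> []" using X(3) by auto
  hence "as \<noteq> []" "bs \<noteq> []" using oriented_infix_interior[OF PP X(1) _ X(2)] by blast+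
  hence steps: "successively (inner_step P) X" using X(1) successively_inner_step by blast
  let ?single = "\<lambda>x. V1_nbrs E S x = {y}"
  have adj: "?single v" if "v \<in> set X" "inner_step P u v \<or> inner_step P v u" "y \<in> V1_nbrs E S u"
    for u v
    using other_end_nbr_adjacent[OF PP that(2) _ that(3) y(3)] X(2) that(1) by blast
  obtain x1 where "x1 \<in> set X" "inner_step P x0 x1 \<or> inner_step P x1 x0"
    using successively_partner[OF steps X(3) y(1)] by blast
  hence "?single x1" using adj y(2) by blast
  hence "?single x0" using adj[of x0 x1] \<open>inner_step P x0 x1 \<or> inner_step P x1 x0\<close> y(1) by blast
  moreover have "successively (\<lambda>a b. ?single a \<longleftrightarrow> ?single b) X"
    using steps by (rule successively_mono) (use adj in blast)
  ultimately have "?single x" if "x \<in> set X" for x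
    using successively_iff_const[of ?single X x0 x] y(1) that by blast
  hence "V1_weight E S x = 2/3" if "x \<in> set X" for x
    using that other_end_end_vertex[OF y(3)] bweight_end_vertex by (simp add: V1_weight_def)
  hence "(\<Sum>x\<in>set X. V1_weight E S x) = (\<Sum>x\<in>set X. 2/3)" by (rule sum.cong[OF refl])
  hence "(\<Sum>x\<in>set X. V1_weight E S x) = 2/3 * card (set X)" by simp
  thus ?thesis using distinct_card[OF oriented_infix_distinct[OF PP X(1)]] by simp
qed


lemma hd_end_not_nbr_after_first:
  assumes Q: "Q \<in> {P, rev P}" "Q = as @ X @ bs" and X: "set X \<subseteq> V2 V E S"
    and as_bs: "as \<noteq> []" "bs \<noteq> []"
    and not_hd: "V1_nbrs E S (hd X) \<noteq> {hd Q}" and x: "x \<in> set (tl X)"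
  shows "hd Q \<notin> V1_nbrs E S x"
proof -
  have "successively (\<lambda>u v. hd Q \<in> V1_nbrs E S v \<longrightarrow> V1_nbrs E S u = {hd Q}) X"
    using successively_inner_step[OF Q(2) as_bs]
  proof (rule successively_mono)
    fix u v assume uv: "u \<in> set X" "v \<in> set X" "inner_step Q u v"
    show "hd Q \<in> V1_nbrs E S v \<longrightarrow> V1_nbrs E S u = {hd Q}"
    proof
      assume "hd Q \<in> V1_nbrs E S v"
      moreover have "inner_step (rev Q) v u" using uv(3) by (simp add: inner_step_rev)
      ultimately have "V1_nbrs E S u \<subseteq> {hd Q}"
        using last_end_nbr_unique[OF oriented_rev[OF Q(1)]] by (auto simp: last_rev)
      thus "V1_nbrs E S u = {hd Q}" using V2_V1_nbrs_nonempty uv(1) X by blast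
    qed
  qed
  thus ?thesis
    by (rule successively_not_after_first[where p = "\<lambda>v. hd Q \<in> V1_nbrs E S v"])
       (use not_hd x in auto)
qed

context
  fixes Q as X bs
  assumes Q: "Q \<in> {P, rev P}" "Q = as @ X @ bs"
    and X: "set X \<subseteq> V2 V E S" "2 \<le> length X"
    and no_other: "\<forall>x\<in>set X. \<forall>y\<in>V1_nbrs E S x. \<not> other_end y"
    and not_hd: "V1_nbrs E S (hd X) \<noteq> {hd Q}" and not_last: "V1_nbrs E S (last X) \<noteq> {last Q}"
begin

lemma cycle_case_shape: "as \<noteq> []" "bs \<noteq> []" "distinct X" "hd X \<noteq> last X"
proof -
  have "X \<noteq> []" using X(2) by auto
  thus "as \<noteq> []" "bs \<noteq> []" using oriented_infix_interior[OF Q _ X(1)] by blast+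
  show "distinct X" using oriented_infix_distinct[OF Q] .
  thus "hd X \<noteq> last X" using X(2) by (rule distinct_hd_neq_last)
qed

lemma cycle_case_end_nbrs:
  assumes x: "x \<in> set X"
  shows "V1_nbrs E S x \<inter> {hd P, last P}
    \<subseteq> (if x = hd X then {hd Q} else {}) \<union> (if x = last X then {last Q} else {})"
proof -
  note shape = cycle_case_shape
  have "hd Q \<notin> V1_nbrs E S x" if "x \<noteq> hd X"
    using distinct_in_set_tl[OF shape(3) x that]
    by (rule hd_end_not_nbr_after_first[OF Q X(1) shape(1,2) not_hd])
  moreover have "last Q \<notin> V1_nbrs E S x" if "x \<noteq> last X"
  proof -
    have rQ: "rev Q \<in> {P, rev P}" "rev Q = rev bs @ rev X @ rev as"
      using oriented_rev[OF Q(1)] Q(2) by simp_all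
    have "distinct (rev X)" "x \<in> set (rev X)" "x \<noteq> hd (rev X)"
      using shape(3) x that by (simp_all add: hd_rev)
    hence "x \<in> set (tl (rev X))" by (rule distinct_in_set_tl)
    moreover have "V1_nbrs E S (hd (rev X)) \<noteq> {hd (rev Q)}" using not_last by (simp add: hd_rev)
    moreover have "set (rev X) \<subseteq> V2 V E S" "rev bs \<noteq> []" "rev as \<noteq> []"
      using X(1) shape(1,2) by simp_all
    ultimately have "hd (rev Q) \<notin> V1_nbrs E S x"
      using hd_end_not_nbr_after_first[OF rQ] by blast
    thus ?thesis by (simp add: hd_rev)
  qed
  ultimately show ?thesis unfolding oriented_ends[OF Q(1), symmetric] by auto
qed

lemma cycle_case_cycle_nbr:
  assumes x: "x \<in> set X"
  shows "\<exists>y\<in>V1_nbrs E S x. in_cycle E S y"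
proof (rule ccontr)
  assume "\<not> ?thesis"
  hence "V1_nbrs E S x \<subseteq> V1_nbrs E S x \<inter> {hd P, last P}"
    using V1_nbr_cases no_other x by blast
  also have "\<dots> \<subseteq> (if x = hd X then {hd Q} else {}) \<union> (if x = last X then {last Q} else {})"
    using cycle_case_end_nbrs[OF x] .
  finally have sub: "V1_nbrs E S x \<subseteq> \<dots>" .
  have ne: "V1_nbrs E S x \<noteq> {}" using V2_V1_nbrs_nonempty x X(1) by blast
  consider "x = hd X" | "x = last X" | "x \<noteq> hd X" "x \<noteq> last X" by blast
  thus False
  proof cases
    case 1
    thus False using sub ne not_hd cycle_case_shape(4) by (auto simp: subset_singleton_iff)
  next
    case 2
    thus False using sub ne not_last cycle_case_shape(4) by (auto simp: subset_singleton_iff)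
  qed (use sub ne in auto)
qed


lemma cycle_case_weight:
  assumes x: "x \<in> set X"
  shows "V1_weight E S x
    \<le> 2/3 * ((if x = hd X then 1 else 0) + (if x = last X then 1 else 0)) + 2/3"
proof -
  obtain x' where x': "x' \<in> set X" "inner_step Q x x' \<or> inner_step Q x' x"
    using successively_partner[OF successively_inner_step[OF Q(2) cycle_case_shape(1,2)] X(2) x]
    by blast
  obtain Q' where Q': "Q' \<in> {P, rev P}" "inner_step Q' x x'"
    using Q(1) x'(2) by (rule oriented_inner_step)
  obtain z where z: "z \<in> V1_nbrs E S x'" "in_cycle E S z" using cycle_case_cycle_nbr[OF x'(1)] by blast
  then obtain D where D: "D \<in> S" "cycle_comp E D" "z \<in> set D" unfolding in_cycle_def by blast
  have "\<forall>y\<in>V1_nbrs E S x. in_cycle E S y \<longrightarrow> y \<in> set D \<and> \<not> ham_path E (set D) y z"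
  proof (intro ballI impI)
    fix y assume y: "y \<in> V1_nbrs E S x" "in_cycle E S y"
    obtain C where C: "C \<in> S" "y \<in> set C" "z \<in> set C" "\<not> ham_path E (set C) y z"
      using cycle_nbrs_common_cycle[OF Q' y z] by blast
    have "C = D" using component_unique C(1,3) D(1,3) by blast
    thus "y \<in> set D \<and> \<not> ham_path E (set D) y z" using C by simp
  qed
  hence w: "V1_weight E S x \<le> 2/3 * card (V1_nbrs E S x \<inter> {hd P, last P}) + 2/3"
    using V1_weight_le_cycle[OF _ D] no_other x by blast
  have "card (V1_nbrs E S x \<inter> {hd P, last P})
      \<le> card ((if x = hd X then {hd Q} else {}) \<union> (if x = last X then {last Q} else {}))"
    by (rule card_mono) (simp_all add: cycle_case_end_nbrs[OF x])
  also have "\<dots> \<le> card (if x = hd X then {hd Q} else {}) + card (if x = last X then {last Q} else {})"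
    by (rule card_Un_le)
  finally have "real (card (V1_nbrs E S x \<inter> {hd P, last P}))
      \<le> (if x = hd X then 1 else 0) + (if x = last X then 1 else 0)"
    by (simp split: if_splits)
  hence "2/3 * real (card (V1_nbrs E S x \<inter> {hd P, last P}))
      \<le> 2/3 * ((if x = hd X then 1 else 0) + (if x = last X then 1 else 0))"
    by (rule mult_left_mono) simp
  thus ?thesis using w by (rule add_right_mono[THEN order.trans[rotated]])
qed

lemma cycle_case_sum: "(\<Sum>x\<in>set X. V1_weight E S x) \<le> 2/3 * (real (length X) + 2)"
proof -
  let ?ind = "\<lambda>a x. if x = a then 1 else (0::real)"
  have "(\<Sum>x\<in>set X. V1_weight E S x)
      \<le> (\<Sum>x\<in>set X. 2/3 * (?ind (hd X) x + ?ind (last X) x) + 2/3)"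
    by (rule sum_mono) (use cycle_case_weight in simp)
  also have "\<dots> = 2/3 * (\<Sum>x\<in>set X. ?ind (hd X) x) + 2/3 * (\<Sum>x\<in>set X. ?ind (last X) x)
      + (\<Sum>x\<in>set X. 2/3)"
    by (simp only: distrib_left sum.distrib sum_distrib_left)
  also have "\<dots> = 2/3 * (real (length X) + 2)"
  proof -
    have "X \<noteq> []" using X(2) by auto
    hence "(\<Sum>x\<in>set X. ?ind (hd X) x) = 1" "(\<Sum>x\<in>set X. ?ind (last X) x) = 1"
      by (simp_all add: sum.delta)
    moreover have "card (set X) = length X" using distinct_card[OF cycle_case_shape(3)] .
    ultimately show ?thesis by simp
  qed
  finally show ?thesis .
qed

end


lemma sum_V1_weight_peel:
  assumes "Q \<in> {P, rev P}" "Q = as @ (x # X) @ bs" "V1_nbrs E S x = {hd Q}"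
  shows "(\<Sum>x\<in>set (x # X). V1_weight E S x) = 2/3 + (\<Sum>x\<in>set X. V1_weight E S x)"
proof -
  have "x \<notin> set X" using oriented_infix_distinct[OF assms(1,2)] by simp
  moreover have "V1_weight E S x = 2/3"
    using assms(3) bweight_end_vertex[OF oriented_hd_end_vertex[OF assms(1)]]
    by (simp add: V1_weight_def)
  ultimately show ?thesis by simp
qed

lemma sum_V1_weight_no_other_end:
  assumes reg: "regular V E 6"
  shows "Q \<in> {P, rev P} \<Longrightarrow> Q = as @ X @ bs \<Longrightarrow> set X \<subseteq> V2 V E S \<Longrightarrow> 2 \<le> length X
    \<Longrightarrow> \<forall>x\<in>set X. \<forall>y\<in>V1_nbrs E S x. \<not> other_end y
    \<Longrightarrow> (\<Sum>x\<in>set X. V1_weight E S x) \<le> 2/3 * (real (length X) + 2)"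
proof (induction "length X" arbitrary: Q as X bs rule: less_induct)
  case less
  note hyps = less.prems
  txt \<open>A boundary vertex whose only \<open>V\<^sub>1\<close>-neighbour is the adjacent end of \<open>P\<close> weighs
    \<open>2/3\<close> and is removed; at the right end of \<open>X\<close> this is done by reading \<open>P\<close> backwards.\<close>
  have peel: "(\<Sum>x\<in>set X'. V1_weight E S x) \<le> 2/3 * (real (length X') + 2)"
    if Q': "Q' \<in> {P, rev P}" "Q' = as' @ X' @ bs'" and X': "set X' = set X" "length X' = length X"
      and single: "V1_nbrs E S (hd X') = {hd Q'}" for Q' as' X' bs'
  proof -
    obtain x X'' where x: "X' = x # X''" using X' hyps(4) by (cases X') auto
    have sum: "(\<Sum>x\<in>set X'. V1_weight E S x) = 2/3 + (\<Sum>x\<in>set X''. V1_weight E S x)"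
      using sum_V1_weight_peel[of Q' as' x X'' bs'] Q' single x by simp
    show ?thesis
    proof (cases "2 \<le> length X''")
      case True
      have "Q' = (as' @ [x]) @ X'' @ bs'" using Q'(2) x by simp
      hence "(\<Sum>x\<in>set X''. V1_weight E S x) \<le> 2/3 * (real (length X'') + 2)"
        using less.hyps[of X'' Q' "as' @ [x]" bs'] Q'(1) True X' x hyps(3,5) by auto
      thus ?thesis using sum x by simp
    next
      case False
      then obtain x' where x': "X'' = [x']" using X' x hyps(4) by (cases X''; cases "tl X''") auto
      have "x' \<in> set X" "x' \<in> set P" using X'(1) x x' oriented_set[OF Q'(1)] Q'(2) by auto
      hence "V1_weight E S x' \<le> 2" using V1_weight_le_two[OF reg] hyps(3,5) by blast
      thus ?thesis using sum x x' by simp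
    qed
  qed
  show ?case
  proof (cases "V1_nbrs E S (hd X) = {hd Q}")
    case True
    thus ?thesis using peel[OF hyps(1,2)] by simp
  next
    case not_hd: False
    show ?thesis
    proof (cases "V1_nbrs E S (last X) = {last Q}")
      case True
      have "rev Q \<in> {P, rev P}" "rev Q = rev bs @ rev X @ rev as"
        using oriented_rev[OF hyps(1)] hyps(2) by simp_all
      moreover have "V1_nbrs E S (hd (rev X)) = {hd (rev Q)}" using True by (simp add: hd_rev)
      ultimately show ?thesis using peel[of "rev Q" "rev bs" "rev X" "rev as"] by simp
    next
      case False
      thus ?thesis using cycle_case_sum[OF hyps not_hd] by blast
    qed
  qed
qed

end

theorem lemma8:
  fixes V :: "'a set" and E :: "'a \<Rightarrow> 'a \<Rightarrow> bool" and S :: "'a list set"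
    and P X :: "'a list" and k :: nat
  assumes "graph V E" and "regular V E 6" and "canonical V E S"
    and "P \<in> S" and "path_comp E P"
    and "\<exists>as bs. P = as @ X @ bs" and "length X = k" and "k \<ge> 2"
    and "set X \<subseteq> V2b V E S"
    and "\<forall>x\<in>set X. \<forall>v. free_edge E S x v \<longrightarrow> \<not> dangerous V E S v"
  shows "b V E S (set X) \<le> 2/3 * (real k + 2)"
proof -
  txt \<open>Only \<open>set X \<subseteq> V\<^sub>2\<close> is needed: the bound holds without the conditions defining
    \<open>V\<^sub>2\<^sup>b\<close> and without the hypothesis on dangerous vertices.\<close>
  interpret canonical_path_component V E S P
    using assms(1,3-5) by unfold_locales
  obtain as bs where X: "P = as @ X @ bs" using assms(6) by blast
  have V2: "set X \<subseteq> V2 V E S" using assms(9) by (auto simp: V2b_def)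
  have "b V E S (set X) = (\<Sum>x\<in>set X. V1_weight E S x)"
    using V2 finite_set by (rule b_eq_sum_V1_weight)
  also have "\<dots> \<le> 2/3 * (real k + 2)"
  proof (cases "\<exists>x\<in>set X. \<exists>y\<in>V1_nbrs E S x. other_end y")
    case True
    then obtain x y where "x \<in> set X" "y \<in> V1_nbrs E S x" "other_end y" by blast
    thus ?thesis using sum_V1_weight_other_end[OF X V2] assms(7,8) by simp
  next
    case False
    thus ?thesis
      using sum_V1_weight_no_other_end[OF assms(2), of P as X bs] X V2 assms(7,8) by simp
  qed
  finally show ?thesis .
qed

end
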